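(* Let $A,A'\in\mathbb{C}^{n\times n}$ with $\|A\|_F=\|A'\|_F=1$, let $v,v'\in\mathbb{C}^n$ be nonzero, and let $\lambda,\lambda'\in\mathbb{C}$ be such that $Av=\lambda v$. Suppose that $\mu(A,\lambda,v)\,\mathrm{dist}((A,\lambda,v),(A',\lambda',v'))\le\frac{\varepsilon}{12.5}$ for some $0<\varepsilon<0.37$. Then $\frac{1}{1+\varepsilon}\mu(A,\lambda,v)\le\mu(A',\lambda',v')\le(1+\varepsilon)\mu(A,\lambda,v)$.
   Context: $\|\cdot\|_F$ is the Frobenius norm. For $v\ne0$, $T_v=\{x\in\mathbb{C}^n:\langle x,v\rangle=0\}$, $P_{v^\perp}$ the orthogonal projection onto $T_v$, $A_{\lambda,v}=P_{v^\perp}(A-\lambda\mathrm{Id})|_{T_v}:T_v\to T_v$, and $\mu(A,\lambda,v)=\|A\|_F\|A_{\lambda,v}^{-1}\|$ (operator norm), with $\mu=\infty$ if $A_{\lambda,v}$ is not invertible. $d_{\mathbb{P}}(v,v')=\arccos(|\langle v,v'\rangle|/(\|v\|\|v'\|))$. For nonzero $A,A'$: $\mathrm{dist}((A,\lambda,v),(A',\lambda',v'))^2=\|\frac{A}{\|A\|_F}-\frac{A'}{\|A'\|_F}\|_F^2+|\frac{\lambda}{\|A\|_F}-\frac{\lambda'}{\|A'\|_F}|^2+d_{\mathbb{P}}(v,v')^2$. *)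

theory Defs
  imports "HOL-Analysis.Analysis" "HOL-Library.Extended_Real"
begin

definition cinner :: "complex^'n \<Rightarrow> complex^'n \<Rightarrow> complex" where
  "cinner x y = (\<Sum>i\<in>UNIV. x$i * cnj (y$i))"

definition fro :: "complex^'n^'n \<Rightarrow> real" where
  "fro A = sqrt (\<Sum>i\<in>UNIV. \<Sum>j\<in>UNIV. (cmod (A$i$j))\<^sup>2)"

definition Tperp :: "complex^'n \<Rightarrow> (complex^'n) set" where
  "Tperp v = {x. cinner x v = 0}"

definition proj_perp :: "complex^'n \<Rightarrow> complex^'n \<Rightarrow> complex^'n" where
  "proj_perp v x = x - (cinner x v / cinner v v) *s v"

text \<open>A_{lambda,v} = P_{v perp} (A - lambda Id), considered on T_v.\<close>
definition Alv :: "complex^'n^'n \<Rightarrow> complex \<Rightarrow> complex^'n \<Rightarrow> complex^'n \<Rightarrow> complex^'n" where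
  "Alv A l v x = proj_perp v ((A - mat l) *v x)"

definition opnorm_on :: "(complex^'n) set \<Rightarrow> (complex^'n \<Rightarrow> complex^'n) \<Rightarrow> real" where
  "opnorm_on S g = Sup {norm (g y) | y. y \<in> S \<and> norm y \<le> 1}"

definition mu :: "complex^'n^'n \<Rightarrow> complex \<Rightarrow> complex^'n \<Rightarrow> ereal" where
  "mu A l v =
     (if bij_betw (Alv A l v) (Tperp v) (Tperp v)
      then ereal (fro A * opnorm_on (Tperp v) (the_inv_into (Tperp v) (Alv A l v)))
      else \<infinity>)"

definition dP :: "complex^'n \<Rightarrow> complex^'n \<Rightarrow> real" where
  "dP v v' = arccos (cmod (cinner v v') / (norm v * norm v'))"

text \<open>Distance between triples (A nonzero).\<close>
definition tdist :: "complex^'n^'n \<Rightarrow> complex \<Rightarrow> complex^'n \<Rightarrow>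
                     complex^'n^'n \<Rightarrow> complex \<Rightarrow> complex^'n \<Rightarrow> real" where
  "tdist A l v A' l' v' = sqrt (
     (sqrt (\<Sum>i\<in>UNIV. \<Sum>j\<in>UNIV. (cmod ((A$i$j) / complex_of_real (fro A)
                                         - (A'$i$j) / complex_of_real (fro A')))\<^sup>2))\<^sup>2
     + (cmod (l / complex_of_real (fro A) - l' / complex_of_real (fro A')))\<^sup>2
     + (dP v v')\<^sup>2)"

end

theory Submission
  imports Defs
begin

text \<open>
  For unit v, \<mu>(A,\<lambda>,v) is the least M with |y| \<le> M |A_{\<lambda>,v} y| for all y in T_v.
  Let s = |P_{v'} v| = sin d_P(v,v'), where P_{v'} projects onto T_{v'}. Projecting y' \<in> T_{v'}
  onto T_v and using (A - \<lambda>) v = 0 gives K |y'| \<le> M |A'_{\<lambda>',v'} y'| with K = 1 - O(s + M dist);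
  projecting back gives the same bound with M and M' = \<mu>(A',\<lambda>',v') exchanged. Since
  |A_{\<lambda>,v}| \<le> |A|_F + |\<lambda>| \<le> 2 we have M \<ge> 1/2, so M dist \<le> \<epsilon>/12.5 makes all error terms O(\<epsilon>),
  and for \<epsilon> < 0.37 both factors 1/K are at most 1 + \<epsilon>. The degenerate cases are T_v = 0,
  where both condition numbers vanish, and \<mu> = \<infinity>, where the hypothesis forces dist = 0.
\<close>

section \<open>The Hermitian inner product\<close>

lemma cinner_add_left: "cinner (x + y) z = cinner x z + cinner y z"
  by (simp add: cinner_def distrib_right sum.distrib)

lemma cinner_add_right: "cinner z (x + y) = cinner z x + cinner z y"
  by (simp add: cinner_def distrib_left sum.distrib)

lemma cinner_diff_left: "cinner (x - y) z = cinner x z - cinner y z"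
  by (simp add: cinner_def left_diff_distrib sum_subtractf)

lemma cinner_scale_left: "cinner (c *s x) z = c * cinner x z"
  by (simp add: cinner_def sum_distrib_left mult.assoc)

lemma cinner_scale_right: "cinner z (c *s x) = cnj c * cinner z x"
  by (simp add: cinner_def sum_distrib_left mult.assoc mult.left_commute)

lemma cinner_commute: "cinner y x = cnj (cinner x y)"
  by (simp add: cinner_def mult.commute)

lemma cinner_zero_left [simp]: "cinner 0 x = 0"
  by (simp add: cinner_def)

lemma power2_norm_vec: "(norm (x::complex^'n))\<^sup>2 = (\<Sum>i\<in>UNIV. (cmod (x$i))\<^sup>2)"
  by (simp add: norm_vec_def L2_set_def sum_nonneg)

lemma cinner_self: "cinner x x = complex_of_real ((norm x)\<^sup>2)"
proof -
  have "x$i * cnj (x$i) = complex_of_real ((cmod (x$i))\<^sup>2)" for i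
    by (metis complex_norm_square)
  thus ?thesis by (simp add: power2_norm_vec cinner_def)
qed

lemma norm_cinner_le: "cmod (cinner x y) \<le> norm x * norm y"
proof -
  have "cmod (cinner x y) \<le> (\<Sum>i\<in>UNIV. cmod (x$i * cnj (y$i)))"
    unfolding cinner_def by (rule norm_sum)
  also have "\<dots> = (\<Sum>i\<in>UNIV. \<bar>cmod (x$i)\<bar> * \<bar>cmod (y$i)\<bar>)" by (simp add: norm_mult)
  also have "\<dots> \<le> L2_set (\<lambda>i. cmod (x$i)) UNIV * L2_set (\<lambda>i. cmod (y$i)) UNIV"
    by (rule L2_set_mult_ineq)
  finally show ?thesis by (simp add: norm_vec_def)
qed

lemma power2_norm_add_cinner: "(norm (x + y))\<^sup>2 = (norm x)\<^sup>2 + (norm y)\<^sup>2 + 2 * Re (cinner x y)"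
proof -
  have "complex_of_real ((norm (x + y))\<^sup>2) = cinner (x + y) (x + y)" by (simp add: cinner_self)
  also have "\<dots> = cinner x x + cinner y y + (cinner x y + cnj (cinner x y))"
    by (simp add: cinner_add_left cinner_add_right cinner_commute[of x y])
  also have "\<dots> = of_real ((norm x)\<^sup>2 + (norm y)\<^sup>2 + 2 * Re (cinner x y))"
    by (simp add: cinner_self complex_add_cnj)
  finally show ?thesis using of_real_eq_iff by blast
qed

lemma norm_smult_vec: "norm (c *s (x::complex^'n)) = cmod c * norm x"
proof -
  have "(norm (c *s x))\<^sup>2 = (cmod c * norm x)\<^sup>2"
    by (simp add: power2_norm_vec power_mult_distrib norm_mult sum_distrib_left)
  thus ?thesis by (simp add: power2_eq_iff_nonneg)
qed

lemma scaleR_eq_smult_of_real: "r *\<^sub>R (x::complex^'n) = complex_of_real r *s x"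
  unfolding vec_eq_iff vector_scaleR_component vector_smult_component
  by (simp add: scaleR_conv_of_real)

section \<open>Orthogonal projections onto hyperplanes\<close>

lemma cinner_proj_perp: "v \<noteq> 0 \<Longrightarrow> cinner (proj_perp v x) v = 0"
  by (simp add: proj_perp_def cinner_diff_left cinner_scale_left cinner_self)

lemma proj_perp_in_Tperp: "v \<noteq> 0 \<Longrightarrow> proj_perp v x \<in> Tperp v"
  by (simp add: Tperp_def cinner_proj_perp)

lemma proj_perp_add: "proj_perp v (x + y) = proj_perp v x + proj_perp v y"
  by (simp add: proj_perp_def cinner_add_left vec_eq_iff add_divide_distrib algebra_simps)

lemma proj_perp_diff: "proj_perp v (x - y) = proj_perp v x - proj_perp v y"
  by (simp add: proj_perp_def cinner_diff_left vec_eq_iff diff_divide_distrib algebra_simps)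

lemma proj_perp_smult: "proj_perp v (c *s x) = c *s proj_perp v x"
  by (simp add: proj_perp_def cinner_scale_left vec_eq_iff algebra_simps)

lemma proj_perp_smult_vec: "k \<noteq> 0 \<Longrightarrow> proj_perp (k *s v) = proj_perp v"
  by (rule ext) (auto simp: proj_perp_def cinner_scale_left cinner_scale_right vector_smult_assoc)

lemma proj_perp_unit: "norm v = 1 \<Longrightarrow> proj_perp v x = x - cinner x v *s v"
  by (simp add: proj_perp_def cinner_self)

lemma power2_norm_proj_perp:
  assumes "norm v = 1"
  shows "(norm x)\<^sup>2 = (norm (proj_perp v x))\<^sup>2 + (cmod (cinner x v))\<^sup>2"
proof -
  have orth: "cinner (proj_perp v x) v = 0" using assms by (auto intro: cinner_proj_perp)
  have "x = proj_perp v x + cinner x v *s v" by (simp add: proj_perp_unit[OF assms])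
  hence "(norm x)\<^sup>2 = (norm (proj_perp v x + cinner x v *s v))\<^sup>2" by simp
  also have "\<dots> = (norm (proj_perp v x))\<^sup>2 + (cmod (cinner x v))\<^sup>2"
    by (simp add: power2_norm_add_cinner cinner_scale_right norm_smult_vec orth assms)
  finally show ?thesis .
qed

lemma norm_proj_perp_le:
  assumes "norm v = 1"
  shows "norm (proj_perp v x) \<le> norm x"
proof -
  have "(norm (proj_perp v x))\<^sup>2 \<le> (norm x)\<^sup>2" using power2_norm_proj_perp[OF assms, of x] by simp
  thus ?thesis by (rule power2_le_imp_le) simp
qed

lemma norm_proj_perp_unit:
  assumes "norm v = 1" "norm v' = 1"
  shows "norm (proj_perp v' v) = sqrt (1 - (cmod (cinner v v'))\<^sup>2)"
proof -
  have "(norm (proj_perp v' v))\<^sup>2 = 1 - (cmod (cinner v v'))\<^sup>2"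
    using power2_norm_proj_perp[OF assms(2), of v] assms by simp
  thus ?thesis by (metis norm_ge_zero real_sqrt_unique)
qed

lemma norm_proj_perp_commute:
  assumes "norm v = 1" "norm v' = 1"
  shows "norm (proj_perp v v') = norm (proj_perp v' v)"
  using norm_proj_perp_unit[OF assms] norm_proj_perp_unit[OF assms(2,1)] cinner_commute[of v v']
  by simp

lemma norm_cinner_perp_le:
  assumes "norm v' = 1" "cinner y v' = 0"
  shows "cmod (cinner y v) \<le> norm y * norm (proj_perp v' v)"
proof -
  have "cinner y v = cinner y (proj_perp v' v + cinner v v' *s v')"
    by (simp add: proj_perp_unit[OF assms(1)])
  also have "\<dots> = cinner y (proj_perp v' v)"
    by (simp add: cinner_add_right cinner_scale_right assms(2))
  finally show ?thesis using norm_cinner_le by simp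
qed

lemma norm_proj_perp_of_perp_ge:
  assumes "norm v = 1" "norm v' = 1" "cinner y v' = 0"
  shows "norm y - norm y * norm (proj_perp v' v) \<le> norm (proj_perp v y)"
proof -
  have "norm y - norm (cinner y v *s v) \<le> norm (y - cinner y v *s v)"
    by (rule norm_triangle_ineq2)
  thus ?thesis
    using norm_cinner_perp_le[OF assms(2,3), of v] assms(1)
    by (simp add: proj_perp_unit norm_smult_vec)
qed

lemma norm_proj_perp_compare:
  assumes "norm u = 1" "norm v = 1"
  shows "norm (proj_perp u x) - norm (z - x) - norm z * norm (proj_perp u v) \<le> norm (proj_perp v z)"
proof -
  have "proj_perp u (proj_perp v z) = proj_perp u z - cinner z v *s proj_perp u v"
    by (simp add: proj_perp_unit[OF assms(2)] proj_perp_diff proj_perp_smult)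
  hence "norm (proj_perp u z) - cmod (cinner z v) * norm (proj_perp u v) \<le> norm (proj_perp u (proj_perp v z))"
    by (metis norm_triangle_ineq2 norm_smult_vec)
  also have "\<dots> \<le> norm (proj_perp v z)" by (rule norm_proj_perp_le[OF assms(1)])
  moreover have "cmod (cinner z v) * norm (proj_perp u v) \<le> norm z * norm (proj_perp u v)"
    using norm_cinner_le[of z v] assms(2) by (simp add: mult_right_mono)
  ultimately have "norm (proj_perp u z) - norm z * norm (proj_perp u v) \<le> norm (proj_perp v z)"
    by linarith
  moreover have "norm (proj_perp u x) - norm (z - x) \<le> norm (proj_perp u z)"
    using norm_triangle_ineq2[of "proj_perp u x" "proj_perp u z"] norm_proj_perp_le[OF assms(1), of "x - z"]
    by (simp add: proj_perp_diff norm_minus_commute)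
  ultimately show ?thesis by linarith
qed

lemma norm_proj_perp_le_dP:
  assumes "norm v = 1" "norm v' = 1"
  shows "norm (proj_perp v' v) \<le> dP v v'"
proof -
  define c where "c = cmod (cinner v v')"
  have c: "0 \<le> c" "c \<le> 1" using norm_cinner_le[of v v'] assms by (simp_all add: c_def)
  have "norm (proj_perp v' v) = sqrt (1 - c\<^sup>2)"
    using norm_proj_perp_unit[OF assms] by (simp add: c_def)
  also have "\<dots> = sin (arccos c)" using sin_arccos[of c] c by simp
  also have "\<dots> \<le> arccos c" using arccos_lbound c by (intro sin_x_le_x) auto
  finally show ?thesis by (simp add: dP_def assms c_def)
qed

lemma Tperp_smult_vec: "k \<noteq> 0 \<Longrightarrow> Tperp (k *s v) = Tperp v"
  by (simp add: Tperp_def cinner_scale_right)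

lemma dP_smult_vec: "k \<noteq> 0 \<Longrightarrow> k' \<noteq> 0 \<Longrightarrow> dP (k *s v) (k' *s v') = dP v v'"
  by (simp add: dP_def cinner_scale_left cinner_scale_right norm_smult_vec norm_mult)

section \<open>Matrices and the Frobenius norm\<close>

lemma mat_matrix_vector_mult: "mat c *v x = c *s (x::'a::semiring_1^'n)"
  by (simp add: vec_eq_iff matrix_vector_mult_def mat_def if_distrib if_distribR cong del: if_weak_cong)

lemma fro_nonneg: "0 \<le> fro A"
  by (simp add: fro_def sum_nonneg)

lemma power2_fro: "(fro A)\<^sup>2 = (\<Sum>i\<in>UNIV. \<Sum>j\<in>UNIV. (cmod (A$i$j))\<^sup>2)"
  by (simp add: fro_def sum_nonneg)

lemma fro_eq_0_iff: "fro A = 0 \<longleftrightarrow> A = 0"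
proof -
  have "fro A = 0 \<longleftrightarrow> (\<Sum>i\<in>UNIV. \<Sum>j\<in>UNIV. (cmod (A$i$j))\<^sup>2) = 0"
    by (simp add: fro_def)
  also have "\<dots> \<longleftrightarrow> (\<forall>i\<in>UNIV. (\<Sum>j\<in>UNIV. (cmod (A$i$j))\<^sup>2) = 0)"
    by (rule sum_nonneg_eq_0_iff) (auto intro: sum_nonneg)
  also have "\<dots> \<longleftrightarrow> (\<forall>i j. A$i$j = 0)"
    by (simp add: sum_nonneg_eq_0_iff)
  finally show ?thesis by (simp add: vec_eq_iff)
qed

lemma norm_matrix_vector_le_fro: "norm ((A::complex^'n^'n) *v x) \<le> fro A * norm x"
proof -
  have row: "(cmod ((A *v x)$i))\<^sup>2 \<le> (\<Sum>j\<in>UNIV. (cmod (A$i$j))\<^sup>2) * (norm x)\<^sup>2" for i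
  proof -
    have "cmod ((A *v x)$i) \<le> (\<Sum>j\<in>UNIV. cmod (A$i$j * x$j))"
      unfolding matrix_vector_mult_def by (simp add: norm_sum)
    also have "\<dots> = (\<Sum>j\<in>UNIV. \<bar>cmod (A$i$j)\<bar> * \<bar>cmod (x$j)\<bar>)" by (simp add: norm_mult)
    also have "\<dots> \<le> L2_set (\<lambda>j. cmod (A$i$j)) UNIV * norm x"
      unfolding norm_vec_def by (rule L2_set_mult_ineq)
    finally have "(cmod ((A *v x)$i))\<^sup>2 \<le> (L2_set (\<lambda>j. cmod (A$i$j)) UNIV * norm x)\<^sup>2"
      by (simp add: power_mono)
    thus ?thesis by (simp add: power_mult_distrib L2_set_def sum_nonneg)
  qed
  have "(norm (A *v x))\<^sup>2 \<le> (\<Sum>i\<in>UNIV. (\<Sum>j\<in>UNIV. (cmod (A$i$j))\<^sup>2) * (norm x)\<^sup>2)"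
    unfolding power2_norm_vec[of "A *v x"] by (rule sum_mono[OF row])
  also have "\<dots> = (fro A * norm x)\<^sup>2"
    by (simp add: power2_fro power_mult_distrib sum_distrib_right)
  finally show ?thesis
    by (rule power2_le_imp_le) (simp add: fro_nonneg)
qed

lemma norm_shift_matrix_vector_le:
  "norm (((A::complex^'n^'n) - mat c) *v x) \<le> (fro A + cmod c) * norm x"
proof -
  have "norm ((A - mat c) *v x) \<le> norm (A *v x) + norm (c *s x)"
    by (simp add: matrix_vector_mult_diff_rdistrib mat_matrix_vector_mult norm_triangle_ineq4)
  also have "\<dots> \<le> fro A * norm x + cmod c * norm x"
    using norm_matrix_vector_le_fro[of A x] by (simp add: norm_smult_vec)
  finally show ?thesis by (simp add: algebra_simps)
qed

lemma norm_shift_matrix_vector_diff_le: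
  fixes A A' :: "complex^'n^'n"
  shows "norm ((A - mat c) *v x - (A' - mat c') *v x) \<le> (fro (A - A') + cmod (c - c')) * norm x"
proof -
  have "(A - mat c) *v x - (A' - mat c') *v x = ((A - A') - mat (c - c')) *v x"
    by (simp add: matrix_vector_mult_diff_rdistrib mat_matrix_vector_mult vec_eq_iff algebra_simps)
  thus ?thesis using norm_shift_matrix_vector_le by metis
qed

lemma shift_matrix_vector_proj_perp_eigen:
  assumes "norm v = 1" "A *v v = c *s v"
  shows "(A - mat c) *v proj_perp v x = (A - mat c) *v x"
proof -
  have "(A - mat c) *v v = 0"
    using assms(2) by (simp add: matrix_vector_mult_diff_rdistrib mat_matrix_vector_mult)
  thus ?thesis
    by (simp add: proj_perp_unit[OF assms(1)] matrix_vector_mult_diff_distrib vector_scalar_commute)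
qed

section \<open>Inverses of maps bounded below on a subspace\<close>

lemma linear_inj_on_subspace_imp_surj:
  fixes f :: "'a::euclidean_space \<Rightarrow> 'a"
  assumes "linear f" "subspace S" "f ` S \<subseteq> S" "inj_on f S"
  shows "f ` S = S"
proof -
  have "dim (f ` S) = dim S" using dim_image_eq[OF assms(1), of S] assms(2,4) span_eq_iff by metis
  moreover have "subspace (f ` S)" using assms linear_subspace_image by blast
  ultimately show ?thesis using subspace_dim_equal assms by (metis order_refl)
qed

lemma bij_betw_opnorm_on_inverse_le:
  fixes f :: "complex^'n \<Rightarrow> complex^'n"
  assumes lin: "linear f" and sub: "subspace S" and into: "f ` S \<subseteq> S" and C: "0 \<le> C"
    and bound: "\<forall>y\<in>S. norm y \<le> C * norm (f y)"
  shows "bij_betw f S S \<and> opnorm_on S (the_inv_into S f) \<le> C"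
proof -
  have inj: "inj_on f S"
  proof (rule inj_onI)
    fix x y assume "x \<in> S" "y \<in> S" "f x = f y"
    hence "x - y \<in> S" "f (x - y) = 0" using sub lin by (auto simp: subspace_diff linear_diff)
    thus "x = y" using bound by fastforce
  qed
  have surj: "f ` S = S" by (rule linear_inj_on_subspace_imp_surj[OF lin sub into inj])
  have "opnorm_on S (the_inv_into S f) \<le> C"
    unfolding opnorm_on_def
  proof (rule cSup_least)
    show "{norm (the_inv_into S f y) |y. y \<in> S \<and> norm y \<le> 1} \<noteq> {}"
      using subspace_0[OF sub] by force
    fix r assume "r \<in> {norm (the_inv_into S f y) |y. y \<in> S \<and> norm y \<le> 1}"
    then obtain y where y: "y \<in> S" "norm y \<le> 1" "r = norm (the_inv_into S f y)" by blast
    have "the_inv_into S f y \<in> S" "f (the_inv_into S f y) = y"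
      using the_inv_into_into[OF inj] f_the_inv_into_f[OF inj] surj y(1) by auto
    hence "r \<le> C * norm y" using bound y(3) by metis
    also have "\<dots> \<le> C" using C y(2) by (simp add: mult_left_le)
    finally show "r \<le> C" .
  qed
  thus ?thesis using inj surj by (simp add: bij_betw_def)
qed

lemma opnorm_on_cong: "(\<And>y. y \<in> S \<Longrightarrow> g y = h y) \<Longrightarrow> opnorm_on S g = opnorm_on S h"
  unfolding opnorm_on_def by (metis (mono_tags, lifting))

lemma norm_le_opnorm_on:
  fixes h :: "complex^'n \<Rightarrow> complex^'n"
  assumes lin: "linear h" and sub: "subspace S"
  shows "0 \<le> opnorm_on S h \<and> (\<forall>y\<in>S. norm (h y) \<le> opnorm_on S h * norm y)"
proof -
  define Q where "Q = {norm (h y) |y. y \<in> S \<and> norm y \<le> 1}"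
  obtain K where K: "\<And>x. norm (h x) \<le> norm x * K"
    using lin linear_conv_bounded_linear bounded_linear.bounded by blast
  have "bdd_above Q"
  proof (rule bdd_aboveI)
    fix r assume "r \<in> Q"
    then obtain z where z: "norm z \<le> 1" "r = norm (h z)" by (auto simp: Q_def)
    have "r \<le> norm z * \<bar>K\<bar>" using K[of z] z(2) mult_left_mono[OF abs_ge_self[of K] norm_ge_zero[of z]] by linarith
    also have "\<dots> \<le> \<bar>K\<bar>" using z(1) by (simp add: mult_left_le_one_le)
    finally show "r \<le> \<bar>K\<bar>" .
  qed
  hence upper: "norm (h z) \<le> Sup Q" if "z \<in> S" "norm z \<le> 1" for z
    using that by (intro cSup_upper) (auto simp: Q_def)
  have "norm (h y) \<le> Sup Q * norm y" if y: "y \<in> S" for y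
  proof (cases "y = 0")
    case True
    thus ?thesis using linear_0[OF lin] by simp
  next
    case False
    have "norm (h ((1 / norm y) *\<^sub>R y)) \<le> Sup Q"
      using False y sub by (intro upper) (auto intro: subspace_scale)
    thus ?thesis using False by (simp add: linear_scale[OF lin] divide_le_eq mult.commute)
  qed
  moreover have "0 \<le> Sup Q"
    using order_trans[OF norm_ge_zero upper[of 0]] subspace_0[OF sub] by simp
  ultimately show ?thesis by (simp add: opnorm_on_def Q_def)
qed

lemma opnorm_on_inverse_bound:
  fixes f :: "complex^'n \<Rightarrow> complex^'n"
  assumes lin: "linear f" and sub: "subspace S" and bij: "bij_betw f S S"
  shows "0 \<le> opnorm_on S (the_inv_into S f)
    \<and> (\<forall>y\<in>S. norm y \<le> opnorm_on S (the_inv_into S f) * norm (f y))"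
proof -
  have inj: "inj_on f S" and surj: "f ` S = S" using bij by (auto simp: bij_betw_def)
  have "span S = S" using sub by (simp add: span_eq_iff)
  with linear_inj_on_left_inverse[OF lin, of S] inj
  obtain h where h: "linear h" "\<forall>x\<in>S. h (f x) = x" by auto
  have "the_inv_into S f z = h z" if "z \<in> S" for z
    using h(2) the_inv_into_into[OF inj] f_the_inv_into_f[OF inj] surj that by (metis order_refl)
  hence "opnorm_on S (the_inv_into S f) = opnorm_on S h" by (rule opnorm_on_cong)
  moreover have "norm y = norm (h (f y))" if "y \<in> S" for y using h(2) that by simp
  ultimately show ?thesis
    using norm_le_opnorm_on[OF h(1) sub] surj by (metis image_eqI)
qed

section \<open>The operator A_{\<lambda>,v} and the condition number\<close>

lemma Tperp_subspace: "subspace (Tperp v)"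
  unfolding subspace_def Tperp_def
  by (simp add: cinner_add_left scaleR_eq_smult_of_real cinner_scale_left)

lemma linear_Alv: "linear (Alv A l v)"
  by (rule linearI)
    (simp_all add: Alv_def matrix_vector_right_distrib proj_perp_add scaleR_eq_smult_of_real
      vector_scalar_commute proj_perp_smult)

lemma Alv_Tperp_subset: "v \<noteq> 0 \<Longrightarrow> Alv A l v ` Tperp v \<subseteq> Tperp v"
  by (auto simp: Alv_def proj_perp_in_Tperp)

lemma Alv_smult_vec: "k \<noteq> 0 \<Longrightarrow> Alv A l (k *s v) = Alv A l v"
  by (simp add: Alv_def proj_perp_smult_vec fun_eq_iff)

lemma norm_Alv_le: "norm v = 1 \<Longrightarrow> norm (Alv A l v y) \<le> (fro A + cmod l) * norm y"
  unfolding Alv_def using norm_proj_perp_le norm_shift_matrix_vector_le order_trans by blast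

lemma mu_le_lower_bound:
  assumes "v \<noteq> 0" "0 \<le> C" "\<forall>y\<in>Tperp v. norm y \<le> C * norm (Alv A l v y)"
  shows "mu A l v \<le> ereal (fro A * C)"
  using bij_betw_opnorm_on_inverse_le[OF linear_Alv Tperp_subspace Alv_Tperp_subset assms(2,3)] assms(1)
  by (simp add: mu_def mult_left_mono fro_nonneg)

lemma mu_finite_lower_bound:
  assumes "v \<noteq> 0" "mu A l v \<noteq> \<infinity>"
  obtains M where "0 \<le> M" "mu A l v = ereal (fro A * M)"
    "\<forall>y\<in>Tperp v. norm y \<le> M * norm (Alv A l v y)"
proof -
  have bij: "bij_betw (Alv A l v) (Tperp v) (Tperp v)"
    using assms(2) by (auto simp: mu_def split: if_splits)
  define M where "M = opnorm_on (Tperp v) (the_inv_into (Tperp v) (Alv A l v))"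
  show ?thesis
    using opnorm_on_inverse_bound[OF linear_Alv Tperp_subspace bij]
    by (intro that[of M]) (simp_all add: mu_def bij M_def)
qed

lemma lower_bound_Tperp_ge:
  assumes "norm v = 1" "Tperp v \<noteq> {0}" "0 \<le> M"
    and low: "\<forall>y\<in>Tperp v. norm y \<le> M * norm (Alv A l v y)"
  shows "1 \<le> (fro A + cmod l) * M"
proof -
  obtain y where y: "y \<in> Tperp v" "y \<noteq> 0"
    using assms(2) subspace_0[OF Tperp_subspace] by blast
  have "norm y \<le> M * ((fro A + cmod l) * norm y)"
    using low y(1) mult_left_mono[OF norm_Alv_le[OF assms(1)] assms(3)] order_trans by blast
  thus ?thesis using y(2) by (simp add: mult.assoc[symmetric] mult.commute[of M])
qed

lemma tdist_nonneg: "0 \<le> tdist A l v A' l' v'"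
  by (simp add: tdist_def)

lemma mu_smult_vec: "k \<noteq> 0 \<Longrightarrow> mu A l (k *s v) = mu A l v"
  by (simp add: mu_def Alv_smult_vec Tperp_smult_vec)

lemma tdist_smult_vec:
  "k \<noteq> 0 \<Longrightarrow> k' \<noteq> 0 \<Longrightarrow> tdist A l (k *s v) A' l' (k' *s v') = tdist A l v A' l' v'"
  by (simp add: tdist_def dP_smult_vec)

lemma mu_Tperp_trivial:
  assumes "v \<noteq> 0" "Tperp v = {0}"
  shows "mu A l v = 0"
proof -
  have le: "mu A l v \<le> 0" using mu_le_lower_bound[of v 0] assms by (simp add: zero_ereal_def)
  hence "mu A l v \<noteq> \<infinity>" by auto
  then obtain M where M: "0 \<le> M" "mu A l v = ereal (fro A * M)"
    using mu_finite_lower_bound[OF assms(1)] by metis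
  have "fro A * M \<le> 0" using le M(2) by (simp add: zero_ereal_def)
  hence "fro A * M = 0" using mult_nonneg_nonneg[OF fro_nonneg[of A] M(1)] by linarith
  thus ?thesis using M(2) by (simp add: zero_ereal_def)
qed

lemma Tperp_trivial_transfer:
  fixes v v' :: "complex^'n"
  assumes "v \<noteq> 0" "v' \<noteq> 0" "Tperp v = {0}"
  shows "Tperp v' = {0}"
proof -
  have multiple: "x = (cinner x v / cinner v v) *s v" for x
    using proj_perp_in_Tperp[OF assms(1), of x] assms(3) by (simp add: proj_perp_def)
  define \<beta> where "\<beta> = cinner v' v / cinner v v"
  have v': "v' = \<beta> *s v" unfolding \<beta>_def by (rule multiple)
  hence "\<beta> \<noteq> 0" using assms(2) by auto
  have "y = 0" if "cinner y v' = 0" for y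
  proof -
    define \<alpha> where "\<alpha> = cinner y v / cinner v v"
    have y: "y = \<alpha> *s v" unfolding \<alpha>_def by (rule multiple)
    have "\<alpha> * cnj \<beta> * cinner v v = 0"
      using that by (auto simp: y v' cinner_scale_left cinner_scale_right mult.assoc)
    thus "y = 0" using \<open>\<beta> \<noteq> 0\<close> assms(1) y by (simp add: cinner_self)
  qed
  thus ?thesis by (auto simp: Tperp_def)
qed

section \<open>Numerical estimates\<close>

lemma le_mult_if_scaled_le:
  fixes x y c K :: real
  assumes "1 \<le> c * K" "0 \<le> c" "0 \<le> x" "K * x \<le> y"
  shows "x \<le> c * y"
proof -
  have "x \<le> (c * K) * x" using mult_right_mono[OF assms(1,3)] by simp
  also have "\<dots> \<le> c * y" using mult_left_mono[OF assms(4,2)] by (simp add: mult.assoc)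
  finally show ?thesis .
qed

lemma power_le_mult_self:
  fixes t c :: real
  assumes "0 \<le> t" "t \<le> c" "0 < n"
  shows "t ^ n \<le> c ^ (n - 1) * t"
proof -
  obtain k where n: "n = Suc k" using assms(3) gr0_implies_Suc by blast
  have "t ^ k * t \<le> c ^ k * t" using assms by (intro mult_right_mono power_mono) auto
  thus ?thesis by (simp add: n mult.commute)
qed

lemma perturbation_factor_forward:
  fixes t :: real
  assumes "0 \<le> t" "12.5 * t < 0.37"
  shows "1 \<le> (1 + 12.5 * t) * (1 - 6 * t - 2 * t\<^sup>2)"
proof -
  have c: "t \<le> 0.0296" using assms by simp
  have "t\<^sup>2 \<le> 0.0296 * t" using power_le_mult_self[OF assms(1) c, of 2] by simp
  moreover have "t ^ 3 \<le> 0.0296\<^sup>2 * t" using power_le_mult_self[OF assms(1) c, of 3] by simp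
  moreover have "(1 + 12.5 * t) * (1 - 6 * t - 2 * t\<^sup>2) = 1 + 6.5 * t - 77 * t\<^sup>2 - 25 * t ^ 3"
    by (simp add: algebra_simps power2_eq_square power3_eq_cube)
  ultimately show ?thesis using assms(1) by (simp add: power_divide)
qed

lemma perturbation_factor_backward:
  fixes t :: real
  assumes "0 \<le> t" "12.5 * t < 0.37"
  shows "1 \<le> (1 + 12.5 * t) * (1 - 2 * t - (1 + 12.5 * t) * (4 * t + 4 * t\<^sup>2))"
proof -
  have c: "t \<le> 0.0296" using assms by simp
  have "t\<^sup>2 \<le> 0.0296 * t" using power_le_mult_self[OF assms(1) c, of 2] by simp
  moreover have "t ^ 3 \<le> 0.0296\<^sup>2 * t" using power_le_mult_self[OF assms(1) c, of 3] by simp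
  moreover have "t ^ 4 \<le> 0.0296 ^ 3 * t" using power_le_mult_self[OF assms(1) c, of 4] by simp
  moreover have "(1 + 12.5 * t) * (1 - 2 * t - (1 + 12.5 * t) * (4 * t + 4 * t\<^sup>2))
      = 1 + 6.5 * t - 129 * t\<^sup>2 - 725 * t ^ 3 - 625 * t ^ 4"
    by (simp add: algebra_simps power2_eq_square power3_eq_cube power4_eq_xxxx)
  ultimately show ?thesis using assms(1) by (simp add: power_divide)
qed

section \<open>Perturbing a unit eigentriple\<close>

locale unit_eigentriple_pair =
  fixes A A' :: "complex^'n^'n" and l l' :: complex and v v' :: "complex^'n"
  assumes fro_A: "fro A = 1" and fro_A': "fro A' = 1"
    and norm_v: "norm v = 1" and norm_v': "norm v' = 1"
    and eigen: "A *v v = l *s v"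
begin

abbreviation "errA \<equiv> fro (A - A')"
abbreviation "errl \<equiv> cmod (l - l')"
abbreviation "sin_angle \<equiv> norm (proj_perp v' v)"

lemma vectors_nonzero: "v \<noteq> 0" "v' \<noteq> 0"
  using norm_v norm_v' by auto

lemma norm_eigenvalue_le: "cmod l \<le> 1"
proof -
  have "cmod l = norm (A *v v)" using eigen norm_v by (simp add: norm_smult_vec)
  thus ?thesis using norm_matrix_vector_le_fro[of A v] fro_A norm_v by simp
qed

lemma norm_perturbed_eigenvalue_le: "cmod l' \<le> 1 + errl"
  using norm_triangle_ineq2[of l' l] norm_eigenvalue_le by (simp add: norm_minus_commute)

lemma sin_angle_commute: "norm (proj_perp v v') = sin_angle"
  by (rule norm_proj_perp_commute[OF norm_v norm_v'])

lemma lower_bound_to_perturbed: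
  assumes M: "0 \<le> M" and low: "\<forall>y\<in>Tperp v. norm y \<le> M * norm (Alv A l v y)"
    and y': "y' \<in> Tperp v'"
  shows "(1 - sin_angle - M * (errA + errl + sin_angle * (2 + errl))) * norm y'
    \<le> M * norm (Alv A' l' v' y')"
proof -
  define w where "w = (A - mat l) *v y'"
  define w' where "w' = (A' - mat l') *v y'"
  have "norm y' - norm y' * sin_angle \<le> norm (proj_perp v y')"
    using norm_proj_perp_of_perp_ge[OF norm_v norm_v'] y' by (simp add: Tperp_def)
  also have "\<dots> \<le> M * norm (proj_perp v w)"
    using low[rule_format, OF proj_perp_in_Tperp[OF vectors_nonzero(1)]]
    by (simp add: Alv_def w_def shift_matrix_vector_proj_perp_eigen[OF norm_v eigen])
  finally have lower: "norm y' - norm y' * sin_angle \<le> M * norm (proj_perp v w)" .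
  have "norm (proj_perp v w) - norm (w' - w) - norm w' * sin_angle \<le> norm (proj_perp v' w')"
    using norm_proj_perp_compare[OF norm_v norm_v'] sin_angle_commute by metis
  moreover have "norm (w' - w) \<le> (errA + errl) * norm y'"
    using norm_shift_matrix_vector_diff_le[of A l y' A' l'] by (simp add: w_def w'_def norm_minus_commute)
  moreover have "norm w' * sin_angle \<le> (2 + errl) * norm y' * sin_angle"
  proof (rule mult_right_mono)
    have "norm w' \<le> (fro A' + cmod l') * norm y'"
      unfolding w'_def by (rule norm_shift_matrix_vector_le)
    also have "\<dots> \<le> (2 + errl) * norm y'"
      using fro_A' norm_perturbed_eigenvalue_le by (intro mult_right_mono) auto
    finally show "norm w' \<le> (2 + errl) * norm y'" .
  qed simp
  ultimately have "norm (proj_perp v w)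
      \<le> norm (Alv A' l' v' y') + (errA + errl + sin_angle * (2 + errl)) * norm y'"
    by (simp add: Alv_def w'_def algebra_simps)
  from mult_left_mono[OF this M] lower show ?thesis
    by (simp add: algebra_simps)
qed

lemma norm_shift_v'_le: "norm ((A - mat l) *v v') \<le> 2 * sin_angle"
proof -
  have "norm ((A - mat l) *v v') = norm ((A - mat l) *v proj_perp v v')"
    by (simp add: shift_matrix_vector_proj_perp_eigen[OF norm_v eigen])
  also have "\<dots> \<le> (fro A + cmod l) * norm (proj_perp v v')"
    by (rule norm_shift_matrix_vector_le)
  also have "\<dots> \<le> 2 * sin_angle"
    using fro_A norm_eigenvalue_le sin_angle_commute by (simp add: mult_right_mono)
  finally show ?thesis .
qed

lemma lower_bound_from_perturbed:
  assumes M': "0 \<le> M'" and low': "\<forall>y'\<in>Tperp v'. norm y' \<le> M' * norm (Alv A' l' v' y')"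
    and y: "y \<in> Tperp v"
  shows "(1 - sin_angle - M' * (errA + errl + 2 * sin_angle + 2 * sin_angle\<^sup>2)) * norm y
    \<le> M' * norm (Alv A l v y)"
proof -
  define y' where "y' = proj_perp v' y"
  define w where "w = (A - mat l) *v y"
  define w' where "w' = (A' - mat l') *v y'"
  have y_perp: "cinner y v = 0" using y by (simp add: Tperp_def)
  have "norm y - norm y * sin_angle \<le> norm y'"
    using norm_proj_perp_of_perp_ge[OF norm_v' norm_v y_perp] sin_angle_commute by (simp add: y'_def)
  also have "\<dots> \<le> M' * norm (proj_perp v' w')"
    using low' proj_perp_in_Tperp[OF vectors_nonzero(2)] by (simp add: y'_def w'_def Alv_def)
  finally have lower: "norm y - norm y * sin_angle \<le> M' * norm (proj_perp v' w')" .
  have "norm (proj_perp v' w') - norm (w - w') - norm w * sin_angle \<le> norm (proj_perp v w)"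
    by (rule norm_proj_perp_compare[OF norm_v' norm_v])
  moreover have "norm (w - w') \<le> (errA + errl) * norm y + 2 * sin_angle\<^sup>2 * norm y"
  proof -
    define k where "k = cinner y v'"
    have "w - w' = ((A - mat l) *v y' - w') + k *s ((A - mat l) *v v')"
      by (simp add: w_def y'_def k_def proj_perp_unit[OF norm_v'] matrix_vector_mult_diff_distrib
          vector_scalar_commute)
    hence "norm (w - w') \<le> norm ((A - mat l) *v y' - w') + cmod k * norm ((A - mat l) *v v')"
      using norm_triangle_ineq by (metis norm_smult_vec)
    also have "\<dots> \<le> (errA + errl) * norm y + norm y * sin_angle * (2 * sin_angle)"
    proof (rule add_mono)
      have "norm ((A - mat l) *v y' - w') \<le> (errA + errl) * norm y'"
        unfolding w'_def by (rule norm_shift_matrix_vector_diff_le)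
      also have "\<dots> \<le> (errA + errl) * norm y"
        using norm_proj_perp_le[OF norm_v'] by (simp add: y'_def mult_left_mono fro_nonneg)
      finally show "norm ((A - mat l) *v y' - w') \<le> (errA + errl) * norm y" .
      show "cmod k * norm ((A - mat l) *v v') \<le> norm y * sin_angle * (2 * sin_angle)"
        using norm_cinner_perp_le[OF norm_v y_perp, of v'] sin_angle_commute norm_shift_v'_le
        by (simp add: k_def mult_mono')
    qed
    finally show ?thesis by (simp add: power2_eq_square algebra_simps)
  qed
  moreover have "norm w * sin_angle \<le> 2 * norm y * sin_angle"
  proof (rule mult_right_mono)
    have "norm w \<le> (fro A + cmod l) * norm y"
      unfolding w_def by (rule norm_shift_matrix_vector_le)
    also have "\<dots> \<le> 2 * norm y"
      using fro_A norm_eigenvalue_le by (intro mult_right_mono) auto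
    finally show "norm w \<le> 2 * norm y" .
  qed simp
  ultimately have "norm (proj_perp v' w') \<le> norm (Alv A l v y)
      + (errA + errl + 2 * sin_angle + 2 * sin_angle\<^sup>2) * norm y"
    by (simp add: Alv_def w_def algebra_simps)
  from mult_left_mono[OF this M'] lower show ?thesis
    by (simp add: algebra_simps)
qed

lemma tdist_eq: "tdist A l v A' l' v' = sqrt (errA\<^sup>2 + errl\<^sup>2 + (dP v v')\<^sup>2)"
  by (simp add: tdist_def fro_A fro_A' power2_fro sum_nonneg)

lemma errors_le_tdist:
  "errA \<le> tdist A l v A' l' v'" "errl \<le> tdist A l v A' l' v'" "sin_angle \<le> tdist A l v A' l' v'"
proof -
  have "dP v v' \<le> tdist A l v A' l' v'" unfolding tdist_eq by (rule real_le_rsqrt) simp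
  thus "sin_angle \<le> tdist A l v A' l' v'" using norm_proj_perp_le_dP[OF norm_v norm_v'] by linarith
  show "errA \<le> tdist A l v A' l' v'" "errl \<le> tdist A l v A' l' v'"
    unfolding tdist_eq by (rule real_le_rsqrt; simp)+
qed

lemma mu_eq_if_tdist_eq_0:
  assumes "tdist A l v A' l' v' = 0"
  shows "mu A' l' v' = mu A l v"
proof -
  have "errA = 0" "errl = 0" "sin_angle = 0"
    using errors_le_tdist assms fro_nonneg[of "A - A'"] by (simp_all add: order_antisym)
  hence AA: "A' = A" and ll: "l' = l" and "proj_perp v' v = 0" by (simp_all add: fro_eq_0_iff)
  hence v: "v = cinner v v' *s v'" by (simp add: proj_perp_unit[OF norm_v'])
  hence "cinner v v' \<noteq> 0" using vectors_nonzero(1) by auto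
  hence "mu A l v = mu A l v'" by (subst v) (rule mu_smult_vec)
  thus ?thesis by (simp add: AA ll)
qed

lemma small_errors:
  assumes "0 \<le> M" "1 \<le> 2 * M" "M * tdist A l v A' l' v' \<le> t"
  shows "M * errA \<le> t" "M * errl \<le> t" "M * sin_angle \<le> t" "errl \<le> 2 * t" "sin_angle \<le> 2 * t"
proof -
  let ?d = "tdist A l v A' l' v'"
  have "?d \<le> 2 * t" using mult_right_mono[OF assms(2) tdist_nonneg[of A l v A' l' v']] assms(3) by simp
  thus "errl \<le> 2 * t" "sin_angle \<le> 2 * t" using errors_le_tdist by linarith+
  show "M * errA \<le> t" "M * errl \<le> t" "M * sin_angle \<le> t"
    using mult_left_mono[OF errors_le_tdist(1) assms(1)] mult_left_mono[OF errors_le_tdist(2) assms(1)]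
      mult_left_mono[OF errors_le_tdist(3) assms(1)] assms(3) by linarith+
qed

lemma mu_perturbed_le:
  assumes M: "0 \<le> M" "1 \<le> 2 * M" "M * tdist A l v A' l' v' \<le> t"
    and low: "\<forall>y\<in>Tperp v. norm y \<le> M * norm (Alv A l v y)"
    and t: "0 \<le> t" "12.5 * t < 0.37"
  shows "mu A' l' v' \<le> ereal ((1 + 12.5 * t) * M)"
proof -
  note small = small_errors[OF M]
  define K where "K = 1 - sin_angle - M * (errA + errl + sin_angle * (2 + errl))"
  have "M * sin_angle * errl \<le> t * (2 * t)" by (rule mult_mono) (use small t in auto)
  hence "1 - 6 * t - 2 * t\<^sup>2 \<le> K" using small by (simp add: K_def algebra_simps power2_eq_square)
  hence "(1 + 12.5 * t) * (1 - 6 * t - 2 * t\<^sup>2) \<le> (1 + 12.5 * t) * K"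
    using t(1) by (intro mult_left_mono) auto
  hence "1 \<le> (1 + 12.5 * t) * K" using perturbation_factor_forward[OF t] by linarith
  hence "\<forall>y'\<in>Tperp v'. norm y' \<le> (1 + 12.5 * t) * M * norm (Alv A' l' v' y')"
    using lower_bound_to_perturbed[OF M(1) low] t(1)
    by (auto simp: K_def mult.assoc intro: le_mult_if_scaled_le)
  moreover have "0 \<le> (1 + 12.5 * t) * M" using M(1) t(1) by simp
  ultimately show ?thesis using mu_le_lower_bound[OF vectors_nonzero(2)] fro_A' by fastforce
qed

lemma mu_le_perturbed:
  assumes M: "0 \<le> M" "1 \<le> 2 * M" "M * tdist A l v A' l' v' \<le> t"
    and M': "0 \<le> M'" "M' \<le> (1 + 12.5 * t) * M"
    and low': "\<forall>y'\<in>Tperp v'. norm y' \<le> M' * norm (Alv A' l' v' y')"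
    and t: "0 \<le> t" "12.5 * t < 0.37"
  shows "mu A l v \<le> ereal ((1 + 12.5 * t) * M')"
proof -
  note small = small_errors[OF M]
  define X where "X = errA + errl + 2 * sin_angle + 2 * sin_angle\<^sup>2"
  have "M * sin_angle * sin_angle \<le> t * (2 * t)" by (rule mult_mono) (use small t in auto)
  hence "M * X \<le> 4 * t + 4 * t\<^sup>2" using small by (simp add: X_def algebra_simps power2_eq_square)
  hence "(1 + 12.5 * t) * (M * X) \<le> (1 + 12.5 * t) * (4 * t + 4 * t\<^sup>2)"
    using t(1) by (intro mult_left_mono) auto
  moreover have "M' * X \<le> (1 + 12.5 * t) * M * X"
    using M'(2) by (rule mult_right_mono) (simp add: X_def fro_nonneg)
  ultimately have "M' * X \<le> (1 + 12.5 * t) * (4 * t + 4 * t\<^sup>2)"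
    by (simp add: mult.assoc)
  hence "1 - 2 * t - (1 + 12.5 * t) * (4 * t + 4 * t\<^sup>2) \<le> 1 - sin_angle - M' * X"
    using small by linarith
  hence "(1 + 12.5 * t) * (1 - 2 * t - (1 + 12.5 * t) * (4 * t + 4 * t\<^sup>2))
      \<le> (1 + 12.5 * t) * (1 - sin_angle - M' * X)"
    using t(1) by (intro mult_left_mono) auto
  hence "1 \<le> (1 + 12.5 * t) * (1 - sin_angle - M' * X)"
    using perturbation_factor_backward[OF t] by linarith
  hence "\<forall>y\<in>Tperp v. norm y \<le> (1 + 12.5 * t) * M' * norm (Alv A l v y)"
    using lower_bound_from_perturbed[OF M'(1) low'] t(1)
    by (auto simp: X_def mult.assoc intro: le_mult_if_scaled_le)
  moreover have "0 \<le> (1 + 12.5 * t) * M'" using M'(1) t(1) by simp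
  ultimately show ?thesis using mu_le_lower_bound[OF vectors_nonzero(1)] fro_A by fastforce
qed

lemma mu_perturbation_finite:
  assumes "Tperp v \<noteq> {0}" "mu A l v \<noteq> \<infinity>" "0 < \<epsilon>" "\<epsilon> < 0.37"
    and hyp: "mu A l v * ereal (tdist A l v A' l' v') \<le> ereal (\<epsilon> / 12.5)"
  shows "ereal (1 / (1 + \<epsilon>)) * mu A l v \<le> mu A' l' v' \<and> mu A' l' v' \<le> ereal (1 + \<epsilon>) * mu A l v"
proof -
  define t where "t = \<epsilon> / 12.5"
  have t: "0 \<le> t" "12.5 * t < 0.37" and \<epsilon>: "\<epsilon> = 12.5 * t" using assms by (simp_all add: t_def)
  obtain M where M: "0 \<le> M" "mu A l v = ereal M"
    and low: "\<forall>y\<in>Tperp v. norm y \<le> M * norm (Alv A l v y)"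
    using mu_finite_lower_bound[OF vectors_nonzero(1) assms(2)] fro_A by auto
  have "(fro A + cmod l) * M \<le> 2 * M"
    using fro_A norm_eigenvalue_le M(1) by (intro mult_right_mono) auto
  hence M_ge: "1 \<le> 2 * M" using lower_bound_Tperp_ge[OF norm_v assms(1) M(1) low] by linarith
  have Md: "M * tdist A l v A' l' v' \<le> t" using hyp M(2) by (simp add: t_def)
  have up: "mu A' l' v' \<le> ereal ((1 + \<epsilon>) * M)"
    using mu_perturbed_le[OF M(1) M_ge Md low t] by (simp add: \<epsilon>)
  hence "mu A' l' v' \<noteq> \<infinity>" by auto
  then obtain M' where M': "0 \<le> M'" "mu A' l' v' = ereal M'"
    and low': "\<forall>y'\<in>Tperp v'. norm y' \<le> M' * norm (Alv A' l' v' y')"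
    using mu_finite_lower_bound[OF vectors_nonzero(2)] fro_A' by (metis mult_1)
  have up': "M' \<le> (1 + \<epsilon>) * M" using up M'(2) by simp
  hence "mu A l v \<le> ereal ((1 + \<epsilon>) * M')"
    using mu_le_perturbed[OF M(1) M_ge Md M'(1) _ low' t] by (simp add: \<epsilon>)
  hence "1 / (1 + \<epsilon>) * M \<le> M'" using M(2) \<open>0 < \<epsilon>\<close> by (simp add: field_simps)
  thus ?thesis using M(2) M'(2) up' by simp
qed

lemma mu_perturbation:
  assumes "0 < \<epsilon>" "\<epsilon> < 0.37"
    and hyp: "mu A l v * ereal (tdist A l v A' l' v') \<le> ereal (\<epsilon> / 12.5)"
  shows "ereal (1 / (1 + \<epsilon>)) * mu A l v \<le> mu A' l' v' \<and> mu A' l' v' \<le> ereal (1 + \<epsilon>) * mu A l v"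
proof -
  consider "Tperp v = {0}" | "mu A l v = \<infinity>" | "Tperp v \<noteq> {0}" "mu A l v \<noteq> \<infinity>" by blast
  thus ?thesis
  proof cases
    case 1
    hence "mu A l v = 0" "mu A' l' v' = 0"
      using mu_Tperp_trivial vectors_nonzero Tperp_trivial_transfer[OF vectors_nonzero] by blast+
    thus ?thesis by simp
  next
    case 2
    have "tdist A l v A' l' v' = 0"
      using hyp 2 tdist_nonneg[of A l v A' l' v'] by (cases "tdist A l v A' l' v' = 0") auto
    thus ?thesis using mu_eq_if_tdist_eq_0 2 \<open>0 < \<epsilon>\<close> by simp
  next
    case 3
    thus ?thesis using mu_perturbation_finite assms by blast
  qed
qed

end

theorem theorem2p9:
  fixes A A' :: "complex^'n^'n" and v v' :: "complex^'n" and l l' :: complex and \<epsilon> :: real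
  assumes "fro A = 1" and "fro A' = 1"
    and "v \<noteq> 0" and "v' \<noteq> 0"
    and "A *v v = l *s v"
    and "0 < \<epsilon>" and "\<epsilon> < 0.37"
    and "mu A l v * ereal (tdist A l v A' l' v') \<le> ereal (\<epsilon> / 12.5)"
  shows "ereal (1 / (1 + \<epsilon>)) * mu A l v \<le> mu A' l' v'
         \<and> mu A' l' v' \<le> ereal (1 + \<epsilon>) * mu A l v"
proof -
  define k where "k = complex_of_real (1 / norm v)"
  define k' where "k' = complex_of_real (1 / norm v')"
  have k: "k \<noteq> 0" "k' \<noteq> 0" using assms(3,4) by (simp_all add: k_def k'_def)
  have "norm (k *s v) = 1" "norm (k' *s v') = 1"
    using assms(3,4) by (simp_all add: k_def k'_def norm_smult_vec norm_divide)
  moreover have "A *v (k *s v) = l *s (k *s v)"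
    by (simp add: vector_scalar_commute assms(5) vector_smult_assoc mult.commute)
  ultimately interpret unit_eigentriple_pair A A' l l' "k *s v" "k' *s v'"
    using assms(1,2) by unfold_locales
  have "mu A l (k *s v) * ereal (tdist A l (k *s v) A' l' (k' *s v')) \<le> ereal (\<epsilon> / 12.5)"
    using assms(8) by (simp only: mu_smult_vec[OF k(1)] tdist_smult_vec[OF k])
  from mu_perturbation[OF assms(6,7) this] show ?thesis
    by (simp only: mu_smult_vec[OF k(1)] mu_smult_vec[OF k(2)])
qed

end
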